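(* Let $T=(t_{ij})$ be an $\mathbb{N}$-tableau of shape $\lambda$ and let $\widehat{T}$ be its image under the toggle map defined in the context. Then \[|\widehat{T}|=\sum_{(i,j)\in\lambda}t_{ij}\,h_{\lambda}(i,j).\]
   Context: Partitions are drawn in English notation with matrix coordinates: the box in row $i$ and column $j$ is $(i,j)$. An $\mathbb{N}$-tableau of shape $\lambda$ is an assignment of a nonnegative integer to each box of $\lambda$; its weight $|T|$ is the sum of its entries. The hook $H_\lambda(i,j)$ is the set of boxes $(i,j')\in\lambda$ with $j'\ge j$ together with the boxes $(i',j)\in\lambda$ with $i'\ge i$, and $h_\lambda(i,j)=|H_\lambda(i,j)|$. A corner box is a box $(i,j)$ such that neither $(i+1,j)$ nor $(i,j+1)$ is a box. The toggle map $T\mapsto\widehat{T}$ is defined recursively: $\widehat{\emptyset}=\emptyset$; if $T'$ is obtained from $T$ by adding a corner box $(i,j)$ (of $\mathrm{sh}(T')$) with entry $x$, then $\widehat{T'}$ is obtained from $\widehat{T}$ as follows. For $k\ge1$ let $\beta_k,\gamma_k,\alpha_k$ be the entries of $\widehat{T}$ at $(i-k,j-k)$, $(i-k+1,j-k)$, $(i-k,j-k+1)$ respectively (taken to be $0$ if the box is not in $\mathrm{sh}(T)$). Then $\widehat{T'}$ agrees with $\widehat{T}$ except that for $1\le k<\min(i,j)$ the entry at $(i-k,j-k)$ becomes $\max(\alpha_{k+1},\gamma_{k+1})+\min(\alpha_k,\gamma_k)-\beta_k$, and the entry at $(i,j)$ is $\max(\alpha_1,\gamma_1)+x$. This is independent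 of the order in which boxes are added. *)

theory Defs
  imports Main
begin

text \<open>Partitions as weakly decreasing lists of positive parts; boxes are 1-indexed
  (row, column) pairs in English/matrix coordinates.\<close>

definition is_partition :: "nat list \<Rightarrow> bool" where
  "is_partition la \<longleftrightarrow> sorted_wrt (\<lambda>a b. a \<ge> b) la \<and> 0 \<notin> set la"

definition shape :: "nat list \<Rightarrow> (nat \<times> nat) set" where
  "shape la = {(i, j). 1 \<le> i \<and> i \<le> length la \<and> 1 \<le> j \<and> j \<le> la ! (i - 1)}"

definition hook :: "nat list \<Rightarrow> nat \<Rightarrow> nat \<Rightarrow> (nat \<times> nat) set" where
  "hook la i j = {(i', j'). (i', j') \<in> shape la \<and> i' = i \<and> j' \<ge> j}
                \<union> {(i', j'). (i', j') \<in> shape la \<and> j' = j \<and> i' \<ge> i}"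

definition hook_len :: "nat list \<Rightarrow> nat \<Rightarrow> nat \<Rightarrow> nat" where
  "hook_len la i j = card (hook la i j)"

text \<open>One step of the toggle map: the current image \<open>Th\<close> has shape \<open>S\<close>
  (entries outside \<open>S\<close> are read as 0); the corner box \<open>(i,j)\<close> is added with entry \<open>x\<close>.\<close>

definition toggle_step ::
  "(nat \<times> nat) set \<Rightarrow> (nat \<times> nat \<Rightarrow> int) \<Rightarrow> nat \<times> nat \<Rightarrow> int \<Rightarrow> (nat \<times> nat \<Rightarrow> int)" where
  "toggle_step S Th b x =
     (let (i, j) = b;
          g = (\<lambda>q. if q \<in> S then Th q else 0);
          \<alpha> = (\<lambda>k. g (i - k, j - k + 1));
          \<gamma> = (\<lambda>k. g (i - k + 1, j - k));
          \<beta> = (\<lambda>k. g (i - k, j - k))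
      in (\<lambda>p. if p = (i, j) then max (\<alpha> 1) (\<gamma> 1) + x
              else if (\<exists>k. 1 \<le> k \<and> k < min i j \<and> p = (i - k, j - k))
              then (let k = i - fst p in
                      max (\<alpha> (k + 1)) (\<gamma> (k + 1)) + min (\<alpha> k) (\<gamma> k) - \<beta> k)
              else g p))"

text \<open>Boxes of a shape in row reading order; each box is a corner of the shape
  formed by it and the preceding boxes.\<close>

definition boxes_order :: "nat list \<Rightarrow> (nat \<times> nat) list" where
  "boxes_order la =
     concat (map (\<lambda>i. map (\<lambda>j. (i, j)) [1..<la ! (i - 1) + 1]) [1..<length la + 1])"

definition toggle :: "nat list \<Rightarrow> (nat \<times> nat \<Rightarrow> nat) \<Rightarrow> (nat \<times> nat \<Rightarrow> int)" where
  "toggle la T =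
     fst (foldl (\<lambda>(Th, S) b. (toggle_step S Th b (int (T b)), insert b S))
                ((\<lambda>_. 0), {}) (boxes_order la))"

end

theory Submission
  imports Defs
begin

text \<open>
  Build the toggle image box by box and keep track of an invariant on the partial image
  \<open>Th\<close> of shape \<open>S\<close>: \<open>Th\<close> is a reverse plane partition supported on \<open>S\<close>, and for every box
  \<open>(a, b)\<close> of \<open>S\<close> with \<open>(a + 1, b + 1) \<notin> S\<close> the sum of \<open>Th\<close> along the diagonal ending at
  \<open>(a, b)\<close> equals the sum \<open>R(a, b)\<close> of \<open>T\<close> over the rectangle \<open>[1, a] \<times> [1, b]\<close>.
  Adding a corner \<open>(i, j)\<close> only changes the diagonal through \<open>(i, j)\<close>; since
  \<open>max + min = sum\<close>, the new diagonal sum telescopes to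
  \<open>t\<^sub>i\<^sub>j + R(i - 1, j) + R(i, j - 1) - R(i - 1, j - 1) = R(i, j)\<close>.
  So each step raises the weight by \<open>R(i, j) - R(i - 1, j - 1)\<close>, the sum of \<open>T\<close> over the boxes
  of the rectangle in row \<open>i\<close> or column \<open>j\<close>; summed over the shape, every \<open>t\<^sub>a\<^sub>b\<close> is counted
  once for each box of its hook.
\<close>

definition down_closed :: "(nat \<times> nat) set \<Rightarrow> bool" where
  "down_closed S \<longleftrightarrow> (\<forall>a b. (a, b) \<in> S \<longrightarrow> 1 \<le> a \<and> 1 \<le> b \<and>
     (\<forall>a' b'. 1 \<le> a' \<longrightarrow> a' \<le> a \<longrightarrow> 1 \<le> b' \<longrightarrow> b' \<le> b \<longrightarrow> (a', b') \<in> S))"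

lemma down_closedD:
  "down_closed S \<Longrightarrow> (a, b) \<in> S \<Longrightarrow> 1 \<le> a' \<Longrightarrow> a' \<le> a \<Longrightarrow> 1 \<le> b' \<Longrightarrow> b' \<le> b \<Longrightarrow> (a', b') \<in> S"
  unfolding down_closed_def by blast

lemma down_closed_pos: "down_closed S \<Longrightarrow> (a, b) \<in> S \<Longrightarrow> 1 \<le> a \<and> 1 \<le> b"
  unfolding down_closed_def by blast

definition addable :: "(nat \<times> nat) set \<Rightarrow> nat \<times> nat \<Rightarrow> bool" where
  "addable S q \<longleftrightarrow> q \<notin> S \<and> down_closed (insert q S)"

lemma addableD:
  assumes "down_closed S" "addable S (i, j)"
  shows "1 \<le> i" "1 \<le> j" "(i, j) \<notin> S" "(i, j + 1) \<notin> S" "(i + 1, j) \<notin> S"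
    and "1 < i \<Longrightarrow> (i - 1, j) \<in> S" "1 < j \<Longrightarrow> (i, j - 1) \<in> S"
proof -
  have S': "down_closed (insert (i, j) S)" and nin: "(i, j) \<notin> S"
    using assms(2) unfolding addable_def by auto
  show i: "1 \<le> i" and j: "1 \<le> j" using down_closed_pos[OF S'] by auto
  show "(i, j) \<notin> S" by (fact nin)
  show "(i, j + 1) \<notin> S" "(i + 1, j) \<notin> S"
    using down_closedD[OF assms(1), of _ _ i j] nin i j by fastforce+
  show "(i - 1, j) \<in> S" if "1 < i"
  proof -
    have "(i - 1, j) \<in> insert (i, j) S" by (rule down_closedD[OF S' insertI1]) (use that j in auto)
    then show ?thesis using that by auto
  qed
  show "(i, j - 1) \<in> S" if "1 < j"
  proof -
    have "(i, j - 1) \<in> insert (i, j) S" by (rule down_closedD[OF S' insertI1]) (use that i in auto)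
    then show ?thesis using that by auto
  qed
qed

definition diag_sum :: "(nat \<times> nat \<Rightarrow> int) \<Rightarrow> nat \<Rightarrow> nat \<Rightarrow> int" where
  "diag_sum Th a b = (\<Sum>k<min a b. Th (a - k, b - k))"

lemma diag_sum_axis: "a = 0 \<or> b = 0 \<Longrightarrow> diag_sum Th a b = 0"
  unfolding diag_sum_def by auto

lemma diag_sum_Suc: "diag_sum Th (Suc a) (Suc b) = Th (Suc a, Suc b) + diag_sum Th a b"
  unfolding diag_sum_def min_Suc_Suc sum.lessThan_Suc_shift by simp

lemma diag_sum_eq_sum_lessThan:
  assumes "\<And>a b. a = 0 \<or> b = 0 \<Longrightarrow> Th (a, b) = 0" "min a b \<le> N"
  shows "(\<Sum>k<N. Th (a - k, b - k)) = diag_sum Th a b"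
  unfolding diag_sum_def
  by (rule sum.mono_neutral_right) (use assms(2) in \<open>auto intro!: assms(1)\<close>)

definition rect_sum :: "(nat \<times> nat \<Rightarrow> nat) \<Rightarrow> nat \<Rightarrow> nat \<Rightarrow> int" where
  "rect_sum T a b = (\<Sum>p\<in>{1..a} \<times> {1..b}. int (T p))"

lemma rect_sum_axis: "a = 0 \<or> b = 0 \<Longrightarrow> rect_sum T a b = 0"
  unfolding rect_sum_def by auto

lemma rect_sum_Suc:
  "rect_sum T (Suc a) (Suc b)
     = rect_sum T a (Suc b) + rect_sum T (Suc a) b - rect_sum T a b + int (T (Suc a, Suc b))"
proof -
  let ?f = "\<lambda>p. int (T p)"
  let ?A = "{1..a} \<times> {1..Suc b}" and ?B = "{1..Suc a} \<times> {1..b}"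
  have "{1..Suc a} \<times> {1..Suc b} = insert (Suc a, Suc b) (?A \<union> ?B)" by auto
  moreover have "?A \<inter> ?B = {1..a} \<times> {1..b}" by auto
  moreover have "sum ?f (?A \<union> ?B) + sum ?f (?A \<inter> ?B) = sum ?f ?A + sum ?f ?B"
    by (rule sum.union_inter) auto
  ultimately show ?thesis unfolding rect_sum_def by (simp add: sum.insert)
qed

definition cohook_sum :: "(nat \<times> nat \<Rightarrow> nat) \<Rightarrow> nat \<times> nat \<Rightarrow> int" where
  "cohook_sum T q = rect_sum T (fst q) (snd q) - rect_sum T (fst q - 1) (snd q - 1)"

lemma toggle_step_vanishing:
  assumes "\<And>p. p \<notin> S \<Longrightarrow> Th p = 0"
  shows "toggle_step S Th = toggle_step UNIV Th"
proof -
  have "(\<lambda>q. if q \<in> S then Th q else 0) = Th" using assms by auto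
  then show ?thesis unfolding toggle_step_def[abs_def] by simp
qed

lemma toggle_step_corner:
  "1 \<le> i \<Longrightarrow> 1 \<le> j \<Longrightarrow> toggle_step UNIV Th (i, j) x (i, j) = max (Th (i - 1, j)) (Th (i, j - 1)) + x"
  by (simp add: toggle_step_def)

lemma toggle_step_diag:
  assumes "1 \<le> k" "k < min i j"
  shows "toggle_step UNIV Th (i, j) x (i - k, j - k) =
     max (Th (i - (k + 1), j - k)) (Th (i - k, j - (k + 1)))
     + min (Th (i - k, j - k + 1)) (Th (i - k + 1, j - k)) - Th (i - k, j - k)"
proof -
  have ne: "(i - k, j - k) \<noteq> (i, j)" and ik: "i - fst (i - k, j - k) = k" using assms by auto
  have ex: "\<exists>k'. 1 \<le> k' \<and> k' < min i j \<and> (i - k, j - k) = (i - k', j - k')"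
    using assms by blast
  have "i - (k + 1) + 1 = i - k" "j - (k + 1) + 1 = j - k" using assms by auto
  then show ?thesis
    unfolding toggle_step_def Let_def case_prod_conv if_not_P[OF ne] if_P[OF ex] ik by simp
qed

lemma toggle_step_off_diag:
  assumes "1 \<le> i" "1 \<le> j" "\<And>k. k < min i j \<Longrightarrow> p \<noteq> (i - k, j - k)"
  shows "toggle_step UNIV Th (i, j) x p = Th p"
proof -
  have "p \<noteq> (i, j)" using assms(1,2) assms(3)[of 0] by simp
  then show ?thesis using assms by (auto simp: toggle_step_def Let_def)
qed

text \<open>The monotonicity conditions serve only to keep the entries nonnegative, on which the
  telescoping in \<open>diag_sum_Th'_corner_recurrence\<close> depends.\<close>

definition toggle_inv :: "(nat \<times> nat \<Rightarrow> nat) \<Rightarrow> (nat \<times> nat) set \<Rightarrow> (nat \<times> nat \<Rightarrow> int) \<Rightarrow> bool" where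
  "toggle_inv T S Th \<longleftrightarrow> finite S \<and> down_closed S \<and>
     (\<forall>p. p \<notin> S \<longrightarrow> Th p = 0) \<and> (\<forall>p. 0 \<le> Th p) \<and>
     (\<forall>a b. (a, b + 1) \<in> S \<longrightarrow> Th (a, b) \<le> Th (a, b + 1)) \<and>
     (\<forall>a b. (a + 1, b) \<in> S \<longrightarrow> Th (a, b) \<le> Th (a + 1, b)) \<and>
     (\<forall>a b. (a, b) \<in> S \<longrightarrow> (a + 1, b + 1) \<notin> S \<longrightarrow> diag_sum Th a b = rect_sum T a b) \<and>
     sum Th S = sum (cohook_sum T) S"

lemma toggle_inv_empty: "toggle_inv T {} (\<lambda>_. 0)"
  unfolding toggle_inv_def down_closed_def by simp

lemma toggle_inv_diag_sum:
  assumes "toggle_inv T S Th" "a = 0 \<or> b = 0 \<or> (a, b) \<in> S \<and> (a + 1, b + 1) \<notin> S"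
  shows "diag_sum Th a b = rect_sum T a b"
  using assms diag_sum_axis rect_sum_axis unfolding toggle_inv_def by metis

locale corner_addition =
  fixes T :: "nat \<times> nat \<Rightarrow> nat" and S :: "(nat \<times> nat) set" and Th :: "nat \<times> nat \<Rightarrow> int"
    and i j :: nat
  assumes inv: "toggle_inv T S Th" and addable: "addable S (i, j)"
begin

definition Th' :: "nat \<times> nat \<Rightarrow> int" where
  "Th' = toggle_step S Th (i, j) (int (T (i, j)))"

definition diagonal :: "(nat \<times> nat) set" where
  "diagonal = (\<lambda>k. (i - k, j - k)) ` {..<min i j}"

definition \<alpha> :: "nat \<Rightarrow> int" where "\<alpha> k = Th (i - k, j - k + 1)"
definition \<gamma> :: "nat \<Rightarrow> int" where "\<gamma> k = Th (i - k + 1, j - k)"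
definition \<beta> :: "nat \<Rightarrow> int" where "\<beta> k = Th (i - k, j - k)"

lemma finite_S: "finite S"
  and down_closed_S: "down_closed S"
  and vanishing: "p \<notin> S \<Longrightarrow> Th p = 0"
  and nonneg: "0 \<le> Th p"
  and mono_row: "(a, b + 1) \<in> S \<Longrightarrow> Th (a, b) \<le> Th (a, b + 1)"
  and mono_col: "(a + 1, b) \<in> S \<Longrightarrow> Th (a, b) \<le> Th (a + 1, b)"
  and weight: "sum Th S = sum (cohook_sum T) S"
  using inv unfolding toggle_inv_def by blast+

lemmas corner = addableD[OF down_closed_S addable]

lemma down_closed_insert: "down_closed (insert (i, j) S)"
  using addable unfolding addable_def by blast

lemma vanishing_axis: "a = 0 \<or> b = 0 \<Longrightarrow> Th (a, b) = 0"
  using vanishing down_closed_pos[OF down_closed_S] by fastforce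

lemma in_S_near_diagonal:
  assumes "1 \<le> k" "k < min i j"
  shows "(i - k, j - k + 1) \<in> S" "(i - k + 1, j - k) \<in> S" "(i - k, j - k) \<in> S"
proof -
  have up: "(i - 1, j) \<in> S" and left: "(i, j - 1) \<in> S" using assms corner by auto
  show "(i - k, j - k + 1) \<in> S" by (rule down_closedD[OF down_closed_S up]) (use assms in auto)
  show "(i - k + 1, j - k) \<in> S" by (rule down_closedD[OF down_closed_S left]) (use assms in auto)
  show "(i - k, j - k) \<in> S" by (rule down_closedD[OF down_closed_S up]) (use assms in auto)
qed

lemma Th'_eq: "Th' = toggle_step UNIV Th (i, j) (int (T (i, j)))"
  unfolding Th'_def by (rule toggle_step_vanishing[OF vanishing, THEN fun_cong, THEN fun_cong])

lemma Th'_off_diagonal: "p \<notin> diagonal \<Longrightarrow> Th' p = Th p"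
  unfolding Th'_eq diagonal_def
  using toggle_step_off_diag corner(1,2) by blast

lemma Th'_diagonal:
  assumes "k < min i j"
  shows "Th' (i - k, j - k) =
    max (\<alpha> (k + 1)) (\<gamma> (k + 1)) + (if k = 0 then int (T (i, j)) else min (\<alpha> k) (\<gamma> k) - \<beta> k)"
proof -
  have "j - (k + 1) + 1 = j - k" "i - (k + 1) + 1 = i - k" using assms by auto
  then show ?thesis
    unfolding Th'_eq \<alpha>_def \<gamma>_def \<beta>_def
    using assms corner(1,2) toggle_step_corner toggle_step_diag by auto
qed

lemma diagonal_bounds:
  assumes "1 \<le> k" "k < min i j"
  shows "\<beta> k \<le> \<alpha> k" "\<beta> k \<le> \<gamma> k" "\<alpha> (k + 1) \<le> \<beta> k" "\<gamma> (k + 1) \<le> \<beta> k"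
proof -
  note near = in_S_near_diagonal[OF assms]
  show "\<beta> k \<le> \<alpha> k" "\<beta> k \<le> \<gamma> k"
    unfolding \<alpha>_def \<beta>_def \<gamma>_def using mono_row[OF near(1)] mono_col[OF near(2)] by auto
  have "Th (i - (k + 1), j - k) \<le> Th (i - (k + 1) + 1, j - k)"
    by (rule mono_col) (use assms near(3) in \<open>simp add: Suc_diff_Suc\<close>)
  moreover have "Th (i - k, j - (k + 1)) \<le> Th (i - k, j - (k + 1) + 1)"
    by (rule mono_row) (use assms near(3) in \<open>simp add: Suc_diff_Suc\<close>)
  moreover have "i - (k + 1) + 1 = i - k" "j - (k + 1) + 1 = j - k" using assms by auto
  ultimately show "\<alpha> (k + 1) \<le> \<beta> k" "\<gamma> (k + 1) \<le> \<beta> k"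
    unfolding \<alpha>_def \<beta>_def \<gamma>_def by simp_all
qed

lemma Th'_diagonal_ge:
  assumes "k < min i j"
  shows "max (\<alpha> (k + 1)) (\<gamma> (k + 1)) \<le> Th' (i - k, j - k)"
proof (cases "k = 0")
  case False
  then show ?thesis using Th'_diagonal[OF assms] diagonal_bounds(1,2)[of k] assms by simp
qed (use Th'_diagonal[OF assms] in simp)

lemma Th'_diagonal_le:
  assumes "1 \<le> k" "k < min i j"
  shows "Th' (i - k, j - k) \<le> min (\<alpha> k) (\<gamma> k)"
  using Th'_diagonal[OF assms(2)] diagonal_bounds(3,4)[OF assms] assms(1) by (simp add: max_def min_def)

lemma corner_in_diagonal: "(i, j) \<in> diagonal"
  using corner(1,2) image_eqI[of "(i, j)" "\<lambda>k. (i - k, j - k)" 0] unfolding diagonal_def by simp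

lemma diagonal_subset: "diagonal \<subseteq> insert (i, j) S"
proof
  fix p assume "p \<in> diagonal"
  then obtain k where "k < min i j" "p = (i - k, j - k)" unfolding diagonal_def by blast
  then show "p \<in> insert (i, j) S" using in_S_near_diagonal(3)[of k] by (cases "k = 0") auto
qed

lemma Th'_nonneg: "0 \<le> Th' p"
proof (cases "p \<in> diagonal")
  case True
  then obtain k where "k < min i j" "p = (i - k, j - k)" unfolding diagonal_def by blast
  then show ?thesis using Th'_diagonal_ge[of k] nonneg[of "(i - (k + 1), j - (k + 1) + 1)"]
    unfolding \<alpha>_def by fastforce
qed (simp add: Th'_off_diagonal nonneg)

lemma Th'_mono_row:
  assumes "(a, b + 1) \<in> insert (i, j) S"
  shows "Th' (a, b) \<le> Th' (a, b + 1)"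
proof (cases "(a, b + 1) \<in> diagonal")
  case True
  then obtain k where k: "k < min i j" "(a, b + 1) = (i - k, j - k)" unfolding diagonal_def by blast
  then have "(a, b) = (i - (k + 1) + 1, j - (k + 1))" "(a, b) \<notin> diagonal"
    unfolding diagonal_def by auto
  then have "Th' (a, b) = \<gamma> (k + 1)" unfolding \<gamma>_def by (simp add: Th'_off_diagonal)
  then show ?thesis using Th'_diagonal_ge[OF k(1)] k(2) by simp
next
  case off: False
  show ?thesis
  proof (cases "(a, b) \<in> diagonal")
    case True
    then obtain k where k: "k < min i j" "(a, b) = (i - k, j - k)" unfolding diagonal_def by blast
    have "k \<noteq> 0" using assms k corner(4) by (cases "k = 0") auto
    then have "Th' (a, b + 1) = \<alpha> k" unfolding \<alpha>_def using off k(2) by (simp add: Th'_off_diagonal)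
    then show ?thesis using Th'_diagonal_le[of k] k \<open>k \<noteq> 0\<close> by simp
  next
    case False
    then show ?thesis using off assms corner_in_diagonal mono_row by (auto simp: Th'_off_diagonal)
  qed
qed

lemma Th'_mono_col:
  assumes "(a + 1, b) \<in> insert (i, j) S"
  shows "Th' (a, b) \<le> Th' (a + 1, b)"
proof (cases "(a + 1, b) \<in> diagonal")
  case True
  then obtain k where k: "k < min i j" "(a + 1, b) = (i - k, j - k)" unfolding diagonal_def by blast
  then have "(a, b) = (i - (k + 1), j - (k + 1) + 1)" "(a, b) \<notin> diagonal"
    unfolding diagonal_def by auto
  then have "Th' (a, b) = \<alpha> (k + 1)" unfolding \<alpha>_def by (simp add: Th'_off_diagonal)
  then show ?thesis using Th'_diagonal_ge[OF k(1)] k(2) by simp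
next
  case off: False
  show ?thesis
  proof (cases "(a, b) \<in> diagonal")
    case True
    then obtain k where k: "k < min i j" "(a, b) = (i - k, j - k)" unfolding diagonal_def by blast
    have "k \<noteq> 0" using assms k corner(5) by (cases "k = 0") auto
    then have "Th' (a + 1, b) = \<gamma> k" unfolding \<gamma>_def using off k(2) by (simp add: Th'_off_diagonal)
    then show ?thesis using Th'_diagonal_le[of k] k \<open>k \<noteq> 0\<close> by simp
  next
    case False
    then show ?thesis using off assms corner_in_diagonal mono_col by (auto simp: Th'_off_diagonal)
  qed
qed

lemma sums_near_diagonal:
  "(\<Sum>k<min i j. \<alpha> (Suc k)) = diag_sum Th (i - 1) j"
  "(\<Sum>k<min i j. \<gamma> (Suc k)) = diag_sum Th i (j - 1)"
  "(\<Sum>k<min i j. \<beta> (Suc k)) = diag_sum Th (i - 1) (j - 1)"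
proof -
  have "(\<Sum>k<min i j. \<alpha> (Suc k)) = (\<Sum>k<min i j. Th (i - 1 - k, j - k))"
    unfolding \<alpha>_def by (intro sum.cong) (auto simp: Suc_diff_Suc)
  also have "\<dots> = diag_sum Th (i - 1) j" by (rule diag_sum_eq_sum_lessThan) (auto intro: vanishing_axis)
  finally show "(\<Sum>k<min i j. \<alpha> (Suc k)) = diag_sum Th (i - 1) j" .
  have "(\<Sum>k<min i j. \<gamma> (Suc k)) = (\<Sum>k<min i j. Th (i - k, j - 1 - k))"
    unfolding \<gamma>_def by (intro sum.cong) (auto simp: Suc_diff_Suc)
  also have "\<dots> = diag_sum Th i (j - 1)" by (rule diag_sum_eq_sum_lessThan) (auto intro: vanishing_axis)
  finally show "(\<Sum>k<min i j. \<gamma> (Suc k)) = diag_sum Th i (j - 1)" .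
  have "(\<Sum>k<min i j. \<beta> (Suc k)) = (\<Sum>k<min i j. Th (i - 1 - k, j - 1 - k))"
    unfolding \<beta>_def by (intro sum.cong) auto
  also have "\<dots> = diag_sum Th (i - 1) (j - 1)" by (rule diag_sum_eq_sum_lessThan) (auto intro: vanishing_axis)
  finally show "(\<Sum>k<min i j. \<beta> (Suc k)) = diag_sum Th (i - 1) (j - 1)" .
qed

lemma diag_sum_Th'_corner_recurrence:
  "diag_sum Th' i j
     = int (T (i, j)) + diag_sum Th (i - 1) j + diag_sum Th i (j - 1) - diag_sum Th (i - 1) (j - 1)"
proof -
  obtain m where m: "min i j = Suc m" using corner(1,2) by (cases "min i j") auto
  define d where "d k = min (\<alpha> k) (\<gamma> k) - \<beta> k" for k
  have "i = Suc m \<or> j = Suc m" using m by linarith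
  then have "\<alpha> (Suc m) = 0 \<or> \<gamma> (Suc m) = 0" "\<beta> (Suc m) = 0"
    unfolding \<alpha>_def \<beta>_def \<gamma>_def by (auto intro: vanishing_axis)
  \<comment> \<open>One of \<open>\<alpha>\<close>, \<open>\<gamma>\<close> reaches an axis at \<open>min i j\<close>, the other is nonnegative.\<close>
  then have d_last: "d (Suc m) = 0"
    unfolding d_def using nonneg[of "(i - Suc m, j - Suc m + 1)"] nonneg[of "(i - Suc m + 1, j - Suc m)"]
    unfolding \<alpha>_def \<gamma>_def by auto
  have shift: "(\<Sum>k<Suc m. if k = 0 then int (T (i, j)) else d k) = (\<Sum>k<Suc m. d (Suc k)) + int (T (i, j))"
    by (subst sum.lessThan_Suc_shift) (simp add: d_last)
  have "diag_sum Th' i j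
      = (\<Sum>k<Suc m. max (\<alpha> (Suc k)) (\<gamma> (Suc k)) + (if k = 0 then int (T (i, j)) else d k))"
    unfolding diag_sum_def m d_def using Th'_diagonal m by (intro sum.cong) auto
  also have "\<dots> = (\<Sum>k<Suc m. max (\<alpha> (Suc k)) (\<gamma> (Suc k)) + d (Suc k)) + int (T (i, j))"
    unfolding sum.distrib shift by simp
  also have "\<dots> = (\<Sum>k<Suc m. \<alpha> (Suc k)) + (\<Sum>k<Suc m. \<gamma> (Suc k)) - (\<Sum>k<Suc m. \<beta> (Suc k))
                   + int (T (i, j))"
    \<comment> \<open>\<open>max x y + min x y = x + y\<close>\<close>
    unfolding d_def sum_subtractf[symmetric] sum.distrib[symmetric]
    by (intro arg_cong2[where f = "(+)"] sum.cong) auto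
  finally show ?thesis unfolding m[symmetric] sums_near_diagonal by simp
qed

lemma diag_sums_around_corner:
  "diag_sum Th (i - 1) j = rect_sum T (i - 1) j"
  "diag_sum Th i (j - 1) = rect_sum T i (j - 1)"
  "diag_sum Th (i - 1) (j - 1) = rect_sum T (i - 1) (j - 1)"
proof -
  show "diag_sum Th (i - 1) j = rect_sum T (i - 1) j"
    using corner(1,4,6) by (intro toggle_inv_diag_sum[OF inv]) auto
  show "diag_sum Th i (j - 1) = rect_sum T i (j - 1)"
    using corner(2,5,7) by (intro toggle_inv_diag_sum[OF inv]) (cases "j = 1", auto)
  show "diag_sum Th (i - 1) (j - 1) = rect_sum T (i - 1) (j - 1)"
  proof (cases "1 < i \<and> 1 < j")
    case True
    then have "(i - 1, j - 1) \<in> S"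
      by (intro down_closedD[OF down_closed_S corner(6)]) auto
    then show ?thesis using corner(3) True by (intro toggle_inv_diag_sum[OF inv]) simp
  qed (use corner(1,2) in \<open>auto intro: toggle_inv_diag_sum[OF inv]\<close>)
qed

lemma diag_sum_Th'_corner: "diag_sum Th' i j = rect_sum T i j"
  using diag_sum_Th'_corner_recurrence diag_sums_around_corner rect_sum_Suc[of T "i - 1" "j - 1"]
    corner(1,2) by simp

lemma diagonal_avoids_other_diagonals:
  assumes "(a, b) \<in> S" "(a + 1, b + 1) \<notin> insert (i, j) S" "k < min a b"
  shows "(a - k, b - k) \<notin> diagonal"
proof
  assume "(a - k, b - k) \<in> diagonal"
  then obtain l where l: "l < min i j" "(a - k, b - k) = (i - l, j - l)"
    unfolding diagonal_def by blast
  show False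
  proof (cases "a < i")
    case True
    then have "(a + 1, b + 1) \<in> insert (i, j) S"
      using l assms(3) by (intro down_closedD[OF down_closed_insert insertI1]) auto
    with assms(2) show False ..
  next
    case False
    then have "(i, j) \<in> S"
      using l assms(3) corner(1,2) by (intro down_closedD[OF down_closed_S assms(1)]) auto
    with corner(3) show False ..
  qed
qed

lemma diag_sum_Th'_unchanged:
  assumes "(a, b) \<in> S" "(a + 1, b + 1) \<notin> insert (i, j) S"
  shows "diag_sum Th' a b = diag_sum Th a b"
  unfolding diag_sum_def
  using diagonal_avoids_other_diagonals[OF assms] by (intro sum.cong) (auto simp: Th'_off_diagonal)

lemma sum_diagonal: "sum f diagonal = diag_sum f i j"
proof -
  have "inj_on (\<lambda>k. (i - k, j - k)) {..<min i j}" unfolding inj_on_def by auto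
  then show ?thesis unfolding diagonal_def diag_sum_def by (simp add: sum.reindex)
qed

lemma Th'_weight: "sum Th' (insert (i, j) S) = sum (cohook_sum T) (insert (i, j) S)"
proof -
  let ?S' = "insert (i, j) S"
  have fin: "finite ?S'" using finite_S by simp
  have "sum Th' ?S' = sum Th' (?S' - diagonal) + rect_sum T i j"
    unfolding sum.subset_diff[OF diagonal_subset fin, of Th'] sum_diagonal diag_sum_Th'_corner ..
  also have "sum Th' (?S' - diagonal) = sum Th (?S' - diagonal)"
    by (rule sum.cong) (auto simp: Th'_off_diagonal)
  also have "\<dots> = sum Th ?S' - diag_sum Th i j"
    unfolding sum.subset_diff[OF diagonal_subset fin, of Th] sum_diagonal by simp
  also have "sum Th ?S' = sum Th S" using finite_S corner(3) vanishing by simp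
  also have "diag_sum Th i j = rect_sum T (i - 1) (j - 1)"
    using diag_sum_Suc[of Th "i - 1" "j - 1"] corner(1,2,3) vanishing diag_sums_around_corner(3)
    by simp
  finally show ?thesis
    using weight finite_S corner(3) unfolding cohook_sum_def by simp
qed

lemma toggle_inv_insert: "toggle_inv T (insert (i, j) S) Th'"
  unfolding toggle_inv_def
proof (intro conjI allI impI)
  show "finite (insert (i, j) S)" using finite_S by simp
  show "down_closed (insert (i, j) S)" by (fact down_closed_insert)
  show "Th' p = 0" if "p \<notin> insert (i, j) S" for p
  proof -
    have "p \<notin> diagonal" using that diagonal_subset by blast
    then show ?thesis using that vanishing by (simp add: Th'_off_diagonal)
  qed
  show "diag_sum Th' a b = rect_sum T a b"
    if "(a, b) \<in> insert (i, j) S" "(a + 1, b + 1) \<notin> insert (i, j) S" for a b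
  proof (cases "(a, b) = (i, j)")
    case False
    then have "(a, b) \<in> S" "(a + 1, b + 1) \<notin> S" using that by auto
    then show ?thesis using diag_sum_Th'_unchanged that(2) inv unfolding toggle_inv_def by auto
  qed (simp add: diag_sum_Th'_corner)
qed (use Th'_nonneg Th'_mono_row Th'_mono_col Th'_weight in auto)

end

lemma toggle_inv_toggle_step:
  "toggle_inv T S Th \<Longrightarrow> addable S (i, j)
    \<Longrightarrow> toggle_inv T (insert (i, j) S) (toggle_step S Th (i, j) (int (T (i, j))))"
  using corner_addition.toggle_inv_insert corner_addition.Th'_def corner_addition.intro by metis

fun addable_seq :: "(nat \<times> nat) set \<Rightarrow> (nat \<times> nat) list \<Rightarrow> bool" where
  "addable_seq S [] \<longleftrightarrow> True"
| "addable_seq S (b # bs) \<longleftrightarrow> addable S b \<and> addable_seq (insert b S) bs"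

lemma addable_seq_append:
  "addable_seq S (xs @ ys) \<longleftrightarrow> addable_seq S xs \<and> addable_seq (S \<union> set xs) ys"
  by (induction xs arbitrary: S) auto

definition toggle_insert ::
  "(nat \<times> nat \<Rightarrow> nat) \<Rightarrow> (nat \<times> nat \<Rightarrow> int) \<times> (nat \<times> nat) set \<Rightarrow> nat \<times> nat
    \<Rightarrow> (nat \<times> nat \<Rightarrow> int) \<times> (nat \<times> nat) set" where
  "toggle_insert T = (\<lambda>(Th, S) b. (toggle_step S Th b (int (T b)), insert b S))"

lemma toggle_eq_foldl: "toggle la T = fst (foldl (toggle_insert T) (\<lambda>_. 0, {}) (boxes_order la))"
  unfolding toggle_def toggle_insert_def ..

lemma toggle_inv_foldl:
  assumes "toggle_inv T S Th" "addable_seq S bs"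
  shows "\<exists>Th'. foldl (toggle_insert T) (Th, S) bs = (Th', S \<union> set bs) \<and> toggle_inv T (S \<union> set bs) Th'"
  using assms
proof (induction bs arbitrary: S Th)
  case (Cons b bs)
  obtain i j where b: "b = (i, j)" by fastforce
  have "toggle_inv T (insert b S) (toggle_step S Th b (int (T b)))"
    using toggle_inv_toggle_step Cons.prems unfolding b by simp
  from Cons.IH[OF this] Cons.prems(2)
  show ?case by (simp add: toggle_insert_def)
qed simp

lemma is_partition_nth_mono:
  "is_partition la \<Longrightarrow> a \<le> b \<Longrightarrow> b < length la \<Longrightarrow> la ! b \<le> la ! a"
  unfolding is_partition_def sorted_wrt_iff_nth_less by (cases "a = b") auto

lemma down_closed_shape:
  assumes "is_partition la"
  shows "down_closed (shape la)"
  unfolding down_closed_def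
proof (intro allI impI conjI)
  fix a b a' b'
  assume ab: "(a, b) \<in> shape la"
  then show "1 \<le> a" "1 \<le> b" unfolding shape_def by auto
  assume "1 \<le> a'" "a' \<le> a" "1 \<le> b'" "b' \<le> b"
  moreover have "la ! (a - 1) \<le> la ! (a' - 1)"
    by (rule is_partition_nth_mono[OF assms]) (use ab calculation in \<open>auto simp: shape_def\<close>)
  ultimately show "(a', b') \<in> shape la" using ab unfolding shape_def by auto
qed

lemma set_boxes_order: "set (boxes_order la) = shape la"
  unfolding boxes_order_def shape_def by force

definition shape_prefix :: "nat list \<Rightarrow> nat \<Rightarrow> nat \<Rightarrow> (nat \<times> nat) set" where
  "shape_prefix la r c = {(a, b) \<in> shape la. a < r \<or> a = r \<and> b \<le> c}"

lemma down_closed_shape_prefix: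
  assumes "is_partition la"
  shows "down_closed (shape_prefix la r c)"
  unfolding down_closed_def
proof (intro allI impI conjI)
  fix a b a' b'
  assume ab: "(a, b) \<in> shape_prefix la r c"
  then show "1 \<le> a" "1 \<le> b"
    using down_closed_pos[OF down_closed_shape[OF assms]] unfolding shape_prefix_def by auto
  assume "1 \<le> a'" "a' \<le> a" "1 \<le> b'" "b' \<le> b"
  then show "(a', b') \<in> shape_prefix la r c"
    using ab down_closedD[OF down_closed_shape[OF assms]] unfolding shape_prefix_def by auto
qed

lemma addable_seq_row:
  assumes "is_partition la" "1 \<le> r" "r \<le> length la" "c \<le> la ! (r - 1)"
  shows "addable_seq (shape_prefix la r 0) (map (\<lambda>b. (r, b)) [1..<c + 1])
    \<and> shape_prefix la r 0 \<union> set (map (\<lambda>b. (r, b)) [1..<c + 1]) = shape_prefix la r c"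
  using assms(4)
proof (induction c)
  case (Suc c)
  have ins: "insert (r, Suc c) (shape_prefix la r c) = shape_prefix la r (Suc c)"
    using assms(2,3) Suc.prems unfolding shape_prefix_def shape_def by auto
  then have "addable (shape_prefix la r c) (r, Suc c)"
    unfolding addable_def using down_closed_shape_prefix[OF assms(1)]
    by (auto simp: shape_prefix_def)
  then show ?case using Suc ins by (auto simp: addable_seq_append)
qed (auto simp: shape_prefix_def shape_def)

lemma addable_seq_rows:
  assumes "is_partition la" "r \<le> length la"
  shows "addable_seq {} (concat (map (\<lambda>i. map (\<lambda>j. (i, j)) [1..<la ! (i - 1) + 1]) [1..<r + 1]))
    \<and> set (concat (map (\<lambda>i. map (\<lambda>j. (i, j)) [1..<la ! (i - 1) + 1]) [1..<r + 1]))
        = shape_prefix la (r + 1) 0"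
  using assms(2)
proof (induction r)
  case 0
  show ?case by (auto simp: shape_prefix_def shape_def)
next
  case (Suc r)
  have "shape_prefix la (Suc r) (la ! r) = shape_prefix la (Suc r + 1) 0"
    unfolding shape_prefix_def shape_def by (auto simp: less_Suc_eq)
  moreover have "[1..<Suc r + 1] = [1..<r + 1] @ [Suc r]" by simp
  ultimately show ?case
    using Suc addable_seq_row[OF assms(1), of "Suc r" "la ! r"]
    by (simp add: addable_seq_append del: upt_Suc)
qed

lemma addable_seq_boxes_order: "is_partition la \<Longrightarrow> addable_seq {} (boxes_order la)"
  using addable_seq_rows[of la "length la"] unfolding boxes_order_def by simp

lemma cohook_sum_eq_sum_hook:
  assumes "is_partition la" "q \<in> shape la"
  shows "cohook_sum T q = (\<Sum>p\<in>{p \<in> shape la. q \<in> hook la (fst p) (snd p)}. int (T p))"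
proof -
  obtain c d where q: "q = (c, d)" by fastforce
  have dc: "down_closed (shape la)" by (rule down_closed_shape[OF assms(1)])
  have mem: "(a, b) \<in> shape la \<and> (c, d) \<in> hook la a b
      \<longleftrightarrow> (a, b) \<in> {1..c} \<times> {1..d} - {1..c - 1} \<times> {1..d - 1}" for a b
  proof -
    have "(a, b) \<in> shape la \<and> (c, d) \<in> hook la a b
        \<longleftrightarrow> (a, b) \<in> shape la \<and> (a = c \<and> b \<le> d \<or> b = d \<and> a \<le> c)"
      using assms(2) unfolding hook_def q by auto
    also have "\<dots> \<longleftrightarrow> 1 \<le> a \<and> a \<le> c \<and> 1 \<le> b \<and> b \<le> d \<and> (a = c \<or> b = d)"
      using down_closedD[OF dc, of c d a b] down_closed_pos[OF dc, of a b] assms(2) unfolding q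
      by auto
    finally show ?thesis by auto
  qed
  have cohook: "{p \<in> shape la. q \<in> hook la (fst p) (snd p)}
      = {1..c} \<times> {1..d} - {1..c - 1} \<times> {1..d - 1}" (is "?H = ?R")
  proof (rule set_eqI)
    show "p \<in> ?H \<longleftrightarrow> p \<in> ?R" for p
      by (cases p) (simp only: mem_Collect_eq fst_conv snd_conv q mem)
  qed
  show ?thesis
    unfolding cohook_sum_def rect_sum_def cohook unfolding q fst_conv snd_conv
    by (intro sum_diff[symmetric]) auto
qed

lemma sum_cohook_sum_shape:
  assumes "is_partition la"
  shows "sum (cohook_sum T) (shape la)
    = (\<Sum>(i, j)\<in>shape la. int (T (i, j)) * int (hook_len la i j))"
proof -
  have fin: "finite (shape la)" by (metis set_boxes_order finite_set)
  have "sum (cohook_sum T) (shape la)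
      = (\<Sum>q\<in>shape la. \<Sum>p\<in>{p \<in> shape la. q \<in> hook la (fst p) (snd p)}. int (T p))"
    using cohook_sum_eq_sum_hook[OF assms] by (rule sum.cong[OF refl])
  also have "\<dots> = (\<Sum>p\<in>shape la. \<Sum>q\<in>{q \<in> shape la. q \<in> hook la (fst p) (snd p)}. int (T p))"
    by (rule sum.swap_restrict[OF fin fin])
  also have "\<dots> = (\<Sum>p\<in>shape la. int (T p) * int (hook_len la (fst p) (snd p)))"
  proof (rule sum.cong[OF refl])
    fix p
    have "{q \<in> shape la. q \<in> hook la (fst p) (snd p)} = hook la (fst p) (snd p)"
      unfolding hook_def by auto
    then show "(\<Sum>q\<in>{q \<in> shape la. q \<in> hook la (fst p) (snd p)}. int (T p))
        = int (T p) * int (hook_len la (fst p) (snd p))"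
      unfolding hook_len_def by simp
  qed
  finally show ?thesis by (simp add: case_prod_beta')
qed

theorem proposition3p1:
  fixes la :: "nat list" and T :: "nat \<times> nat \<Rightarrow> nat"
  assumes "is_partition la"
  shows "(\<Sum>b\<in>shape la. toggle la T b)
         = (\<Sum>(i, j)\<in>shape la. int (T (i, j)) * int (hook_len la i j))"
proof -
  obtain Th where "foldl (toggle_insert T) (\<lambda>_. 0, {}) (boxes_order la) = (Th, shape la)"
    and "toggle_inv T (shape la) Th"
    using toggle_inv_foldl[OF toggle_inv_empty addable_seq_boxes_order[OF assms]]
    by (auto simp: set_boxes_order)
  then have "(\<Sum>b\<in>shape la. toggle la T b) = sum (cohook_sum T) (shape la)"
    unfolding toggle_eq_foldl toggle_inv_def by simp
  also have "\<dots> = (\<Sum>(i, j)\<in>shape la. int (T (i, j)) * int (hook_len la i j))"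
    by (rule sum_cohook_sum_shape[OF assms])
  finally show ?thesis .
qed

end
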